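(* Consider the following binary classification model of feature learning. Let $p_d\in[0,1]$, $p_r = 1-p_d$, and let $t_d, t_r, n_d, n_r, c_d, c_r$ be nonnegative integers with $n_d \le t_d$, $n_r\le t_r$, $c_d\le t_d$, $c_r\le t_r$. Each class $y\in\{1,2\}$ has its own set $D_y$ of $t_d$ dominant features and its own set $R_y$ of $t_r$ rare features, all these sets being pairwise disjoint. A data point $(x,y)$ is generated as follows: $y$ is uniform on $\{1,2\}$; then with probability $p_d$ the point is dominant, and its feature set $\Pi(x)$ is a uniformly random $n_d$-element subset of $D_y$ (sampled without replacement); otherwise (probability $p_r$) it is rare, and $\Pi(x)$ is a uniformly random $n_r$-element subset of $R_y$. A model $f$ is drawn, independently of the data, by choosing for each class $y$ a uniformly random $c_d$-element subset of $D_y$ and a uniformly random $c_r$-element subset of $R_y$ (all choices independent); $\Pi(f)$ is the union of these subsets. On $(x,y)$, $f$ predicts $y$ if $\Pi(f)\cap\Pi(x)\neq\varnothing$, and otherwise outputs a uniformly random guess in $\{1,2\}$, so its expected error on $(x,y)$ is $\frac12\mathbf{1}\{\Pi(f)\cap\Pi(x)=\varnothing\}$. Then, with the convention $\binom{n}{r}=0$ when $n<r$, the expected accuracy over the model distribution and the data distribution is $$\mathsf{Acc} = p_d\left(1-\frac12\frac{\binom{t_d-c_d}{n_d}}{\binom{t_d}{n_d}}\right) + p_r\left(1-\frac12\frac{\binom{t_r-c_r}{n_r}}{\binom{t_r}{n_r}}\right).$$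
   Context: In the paper, $c$ denotes the total model capacity, with $c_d=\frac12 p_d c$ and $c_r = \frac12 p_r c$, both rounded to integers so that the total number of features of a model is $c$. These serve only to define $c_d,c_r$; the statement holds for any such integers. *)

theory Defs
  imports "HOL-Probability.Probability"
begin

definition ksubsets :: "'a set \<Rightarrow> nat \<Rightarrow> 'a set set" where
  "ksubsets A k = {S. S \<subseteq> A \<and> card S = k}"

text \<open>Data distribution: pairs (feature set \<Pi>(x), label y). Class labels are 1 and 2;
  D y / R y are the dominant / rare feature sets of class y.\<close>
definition data_pmf :: "real \<Rightarrow> nat \<Rightarrow> nat \<Rightarrow> (nat \<Rightarrow> 'a set) \<Rightarrow> (nat \<Rightarrow> 'a set)
    \<Rightarrow> ('a set \<times> nat) pmf" where
  "data_pmf p_d n_d n_r D R =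
     bind_pmf (pmf_of_set {1, 2}) (\<lambda>y.
     bind_pmf (bernoulli_pmf p_d) (\<lambda>dom.
     bind_pmf (if dom then pmf_of_set (ksubsets (D y) n_d) else pmf_of_set (ksubsets (R y) n_r))
       (\<lambda>S. return_pmf (S, y))))"

definition model_pmf :: "nat \<Rightarrow> nat \<Rightarrow> (nat \<Rightarrow> 'a set) \<Rightarrow> (nat \<Rightarrow> 'a set) \<Rightarrow> 'a set pmf" where
  "model_pmf c_d c_r D R =
     bind_pmf (pmf_of_set (ksubsets (D 1) c_d)) (\<lambda>A1.
     bind_pmf (pmf_of_set (ksubsets (R 1) c_r)) (\<lambda>B1.
     bind_pmf (pmf_of_set (ksubsets (D 2) c_d)) (\<lambda>A2.
     bind_pmf (pmf_of_set (ksubsets (R 2) c_r)) (\<lambda>B2.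
       return_pmf (A1 \<union> B1 \<union> A2 \<union> B2)))))"

definition err :: "'a set \<Rightarrow> 'a set \<Rightarrow> real" where
  "err F S = (if F \<inter> S = {} then 1/2 else 0)"

definition Acc :: "real \<Rightarrow> nat \<Rightarrow> nat \<Rightarrow> nat \<Rightarrow> nat \<Rightarrow> (nat \<Rightarrow> 'a set) \<Rightarrow> (nat \<Rightarrow> 'a set) \<Rightarrow> real" where
  "Acc p_d n_d n_r c_d c_r D R =
     measure_pmf.expectation (pair_pmf (model_pmf c_d c_r D R) (data_pmf p_d n_d n_r D R))
       (\<lambda>(F, (S, y)). 1 - err F S)"

end

(* Condition on the model. Because the four feature blocks are pairwise disjoint, every model
   in the support meets each dominant block in exactly c_d and each rare block in exactly c_r
   features, so the expected accuracy over the data is the same number for every model.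
   Given the class and the kind of the data point, a uniform n-subset of a t-element block
   misses a fixed c-element part of it with probability C(t-c, n) / C(t, n), the fraction of
   n-subsets lying in the complement of that part. *)
theory Submission imports Defs begin

lemma expectation_bind_pmf:
  fixes f :: "'b \<Rightarrow> real"
  assumes "\<And>x. \<bar>f x\<bar> \<le> B"
  shows "measure_pmf.expectation (bind_pmf M N) f =
    measure_pmf.expectation M (\<lambda>x. measure_pmf.expectation (N x) f)"
  unfolding measure_pmf_bind
  by (rule integral_bind[where K = "count_space UNIV" and B = B and B' = 1])
    (use assms in \<open>auto simp: measure_pmf.emeasure_space_1 measure_pmf_in_subprob_space\<close>)

lemma expectation_pair_pmf:
  fixes f :: "'a \<times> 'b \<Rightarrow> real"
  assumes "\<And>x. \<bar>f x\<bar> \<le> B"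
  shows "measure_pmf.expectation (pair_pmf M N) f =
    measure_pmf.expectation M (\<lambda>x. measure_pmf.expectation N (\<lambda>y. f (x, y)))"
  unfolding pair_pmf_def by (simp add: expectation_bind_pmf[OF assms])

lemma finite_ksubsets: "finite T \<Longrightarrow> finite (ksubsets T k)"
  unfolding ksubsets_def by (rule rev_finite_subset[of "Pow T"]) auto

lemma ksubsets_nonempty: "finite T \<Longrightarrow> k \<le> card T \<Longrightarrow> ksubsets T k \<noteq> {}"
  unfolding ksubsets_def using obtain_subset_with_card_n by blast

lemma card_ksubsets: "finite T \<Longrightarrow> card (ksubsets T k) = card T choose k"
  unfolding ksubsets_def by (rule n_subsets)

lemma set_pmf_of_ksubsets:
  "finite T \<Longrightarrow> k \<le> card T \<Longrightarrow> set_pmf (pmf_of_set (ksubsets T k)) = ksubsets T k"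
  by (simp add: finite_ksubsets ksubsets_nonempty)

lemma ksubsets_Diff: "ksubsets (T - F) k = {S \<in> ksubsets T k. F \<inter> S = {}}"
  unfolding ksubsets_def by auto

lemma prob_ksubset_disjoint:
  assumes "finite T" "n \<le> card T"
  shows "measure_pmf.prob (pmf_of_set (ksubsets T n)) {S. F \<inter> S = {}} =
    real ((card T - card (F \<inter> T)) choose n) / real (card T choose n)"
proof -
  have "ksubsets T n \<inter> {S. F \<inter> S = {}} = ksubsets (T - F) n"
    by (auto simp: ksubsets_Diff)
  moreover have "card (T - F) = card T - card (F \<inter> T)"
    by (metis assms(1) card_Diff_subset_Int finite_Int inf_commute)
  ultimately show ?thesis
    using assms by (simp add: measure_pmf_of_set finite_ksubsets ksubsets_nonempty
      card_ksubsets finite_Diff)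
qed

lemma err_eq_indicator: "err F S = 1/2 * indicator {S. F \<inter> S = {}} S"
  by (simp add: err_def)

lemma expectation_accuracy_ksubset:
  assumes "finite T" "n \<le> card T"
  shows "measure_pmf.expectation (pmf_of_set (ksubsets T n)) (\<lambda>S. 1 - err F S) =
    1 - 1/2 * (real ((card T - card (F \<inter> T)) choose n) / real (card T choose n))"
proof -
  let ?M = "pmf_of_set (ksubsets T n)" and ?miss = "{S. F \<inter> S = {}}"
  have "measure_pmf.expectation ?M (\<lambda>S. 1 - err F S) =
      1 - 1/2 * measure_pmf.expectation ?M (indicator ?miss)"
    unfolding err_eq_indicator
    by (subst Bochner_Integration.integral_diff) 
      (simp_all add: integrable_measure_pmf_finite set_pmf_of_ksubsets finite_ksubsets assms)
  also have "measure_pmf.expectation ?M (indicator ?miss) = measure_pmf.prob ?M ?miss"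
    by simp
  finally show ?thesis
    using prob_ksubset_disjoint[OF assms] by simp
qed

lemma bounded_accuracy: "\<bar>1 - err F S\<bar> \<le> (1::real)"
  by (simp add: err_def)

lemma expectation_accuracy_data:
  assumes "0 \<le> p_d" "p_d \<le> 1"
    and "\<forall>y\<in>{1,2}. finite (D y) \<and> card (D y) = t_d \<and> finite (R y) \<and> card (R y) = t_r"
    and "n_d \<le> t_d" "n_r \<le> t_r"
    and "\<forall>y\<in>{1,2}. card (F \<inter> D y) = c_d \<and> card (F \<inter> R y) = c_r"
  shows "measure_pmf.expectation (data_pmf p_d n_d n_r D R) (\<lambda>(S, y). 1 - err F S) =
      p_d * (1 - 1/2 * (real ((t_d - c_d) choose n_d) / real (t_d choose n_d)))
    + (1 - p_d) * (1 - 1/2 * (real ((t_r - c_r) choose n_r) / real (t_r choose n_r)))"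
    (is "_ = ?V")
proof -
  have bounded: "\<And>x. \<bar>(\<lambda>(S, y). 1 - err F S) x\<bar> \<le> 1"
    by (simp add: bounded_accuracy split: prod.split)
  define class_pmf where "class_pmf y =
    bind_pmf (bernoulli_pmf p_d) (\<lambda>dom.
      bind_pmf (if dom then pmf_of_set (ksubsets (D y) n_d) else pmf_of_set (ksubsets (R y) n_r))
        (\<lambda>S. return_pmf (S, y)))" for y
  have per_class: "measure_pmf.expectation (class_pmf y) (\<lambda>(S, y). 1 - err F S) = ?V"
    if "y \<in> {1, 2}" for y
  proof -
    have "finite (D y)" "card (D y) = t_d" "card (F \<inter> D y) = c_d"
      and "finite (R y)" "card (R y) = t_r" "card (F \<inter> R y) = c_r"
      using assms(3,6) that by auto
    then show ?thesis
      using assms(1,2,4,5)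
      by (simp add: class_pmf_def expectation_bind_pmf[OF bounded] integral_bernoulli_pmf
          bind_return_pmf' expectation_accuracy_ksubset mult.commute)
  qed
  have "data_pmf p_d n_d n_r D R = bind_pmf (pmf_of_set {1, 2}) class_pmf"
    unfolding data_pmf_def class_pmf_def[abs_def] ..
  then show ?thesis
    by (simp add: expectation_bind_pmf[OF bounded] integral_pmf_of_set per_class)
qed

lemma model_pmf_meets_blocks:
  assumes "F \<in> set_pmf (model_pmf c_d c_r D R)"
    and "\<forall>y\<in>{1,2}. finite (D y) \<and> card (D y) = t_d \<and> finite (R y) \<and> card (R y) = t_r"
    and "c_d \<le> t_d" "c_r \<le> t_r"
    and "D 1 \<inter> D 2 = {}" "R 1 \<inter> R 2 = {}" "\<forall>y\<in>{1,2}. \<forall>y'\<in>{1,2}. D y \<inter> R y' = {}"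
  shows "\<forall>y\<in>{1,2}. card (F \<inter> D y) = c_d \<and> card (F \<inter> R y) = c_r"
proof -
  obtain A1 B1 A2 B2 where
    A1: "A1 \<in> ksubsets (D 1) c_d" and B1: "B1 \<in> ksubsets (R 1) c_r" and
    A2: "A2 \<in> ksubsets (D 2) c_d" and B2: "B2 \<in> ksubsets (R 2) c_r" and
    F: "F = A1 \<union> B1 \<union> A2 \<union> B2"
    using assms(1-4) by (auto simp: model_pmf_def set_pmf_of_ksubsets)
  have "F \<inter> D 1 = A1" "F \<inter> D 2 = A2" "F \<inter> R 1 = B1" "F \<inter> R 2 = B2"
    using A1 A2 B1 B2 F assms(5-7) unfolding ksubsets_def by blast+
  with A1 A2 B1 B2 show ?thesis
    unfolding ksubsets_def by auto
qed

theorem mainTheorem1: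
  fixes p_d :: real and t_d t_r n_d n_r c_d c_r :: nat
    and D R :: "nat \<Rightarrow> 'a set"
  assumes "0 \<le> p_d" "p_d \<le> 1"
    and "n_d \<le> t_d" "n_r \<le> t_r" "c_d \<le> t_d" "c_r \<le> t_r"
    and "\<forall>y\<in>{1,2}. finite (D y) \<and> card (D y) = t_d \<and> finite (R y) \<and> card (R y) = t_r"
    and "D 1 \<inter> D 2 = {}" "R 1 \<inter> R 2 = {}"
    and "\<forall>y\<in>{1,2}. \<forall>y'\<in>{1,2}. D y \<inter> R y' = {}"
  shows "Acc p_d n_d n_r c_d c_r D R =
      p_d * (1 - 1/2 * (real ((t_d - c_d) choose n_d) / real (t_d choose n_d)))
    + (1 - p_d) * (1 - 1/2 * (real ((t_r - c_r) choose n_r) / real (t_r choose n_r)))"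
    (is "_ = ?V")
proof -
  have "Acc p_d n_d n_r c_d c_r D R = measure_pmf.expectation (model_pmf c_d c_r D R)
      (\<lambda>F. measure_pmf.expectation (data_pmf p_d n_d n_r D R) (\<lambda>(S, y). 1 - err F S))"
    unfolding Acc_def
    by (subst expectation_pair_pmf[where B = 1]) (auto simp: bounded_accuracy split: prod.split)
  also have "\<dots> = measure_pmf.expectation (model_pmf c_d c_r D R) (\<lambda>F. ?V)"
  proof (rule integral_cong_AE)
    show "AE F in model_pmf c_d c_r D R.
        measure_pmf.expectation (data_pmf p_d n_d n_r D R) (\<lambda>(S, y). 1 - err F S) = ?V"
      using model_pmf_meets_blocks[OF _ assms(7,5,6,8-10)] expectation_accuracy_data[OF assms(1,2,7,3,4)]
      by (simp add: AE_measure_pmf_iff)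
  qed simp_all
  finally show ?thesis
    by simp
qed

end
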